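(* For every positive integer $r$ there is a ReLU network with two input units, all of whose weights lie in $\{\frac12,-\frac12\}$, implementing a function $\times':\mathbb{R}^2\to\mathbb{R}$ such that: (i) $\times'(x,y)=0$ whenever $x=0$ or $y=0$; (ii) $|\times'(x,y)-xy|\le 6\cdot 2^{-2(r+1)}$ for all $x,y\in[-1,1]$; (iii) the depth is $\mathcal{O}(r)$; (iv) the width is bounded by a constant independent of $r$; (v) the number of weights is $\mathcal{O}(r)$.
   Context: A ReLU network is a feedforward network with activation $\sigma(x)=\max(0,x)$ in which each unit connects only to units in the next layer; depth is the number of layers and width the maximum number of units in a layer. *)

theory Defs
  imports Main "HOL.Real"
begin

definition relu :: "real \<Rightarrow> real" where
  "relu x = max 0 x"

text \<open>A unit (neuron) is given by its list of incoming weights (one per unit of the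
  previous layer; weight 0 means: no connection) and its bias (0 means: no bias).
  A layer is a list of units; a network is the list of its non-input layers
  (hidden layers followed by the output layer).\<close>
type_synonym neuron = "real list \<times> real"
type_synonym layer = "neuron list"
type_synonym network = "layer list"

definition eval_neuron :: "neuron \<Rightarrow> real list \<Rightarrow> real" where
  "eval_neuron u xs = sum_list (map2 (*) (fst u) xs) + snd u"

fun eval_net :: "network \<Rightarrow> real list \<Rightarrow> real list" where
  "eval_net [] xs = xs"
| "eval_net [L] xs = map (\<lambda>u. eval_neuron u xs) L"
| "eval_net (L # Ls) xs = eval_net Ls (map (\<lambda>u. relu (eval_neuron u xs)) L)"

fun wf_layers :: "nat \<Rightarrow> network \<Rightarrow> bool" where
  "wf_layers n [] = False"
| "wf_layers n [L] = (length L = 1 \<and> (\<forall>u\<in>set L. length (fst u) = n))"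
| "wf_layers n (L # Ls) = (L \<noteq> [] \<and> (\<forall>u\<in>set L. length (fst u) = n) \<and> wf_layers (length L) Ls)"

definition relu_net2 :: "network \<Rightarrow> bool" where
  "relu_net2 N = wf_layers 2 N"

definition net_fun :: "network \<Rightarrow> real \<Rightarrow> real \<Rightarrow> real" where
  "net_fun N x y = hd (eval_net N [x, y])"

definition half_weights :: "network \<Rightarrow> bool" where
  "half_weights N = (\<forall>L\<in>set N. \<forall>u\<in>set L.
      (\<forall>w\<in>set (fst u). w \<in> {0, 1/2, -1/2}) \<and> snd u \<in> {0, 1/2, -1/2})"

text \<open>Depth = number of layers (including the input layer).\<close>
definition depth :: "network \<Rightarrow> nat" where
  "depth N = length N + 1"

text \<open>Width = maximal number of units in a layer (including the input layer of size 2).\<close>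
definition width :: "network \<Rightarrow> nat" where
  "width N = Max (insert 2 (set (map length N)))"

definition num_weights :: "network \<Rightarrow> nat" where
  "num_weights N = (\<Sum>L\<leftarrow>N. \<Sum>u\<leftarrow>L.
      length (filter (\<lambda>w. w \<noteq> 0) (fst u)) + (if snd u \<noteq> 0 then 1 else 0))"

end

theory Submission
  imports Defs
begin

text \<open>Since \<open>x y = ((x+y)/2)\<^sup>2 - ((x-y)/2)\<^sup>2\<close>, it suffices to approximate \<open>t \<mapsto> t\<^sup>2\<close> on
  \<open>[0,1]\<close>.  With the tent map \<open>g\<close>, the identity \<open>t\<^sup>2 = t - g t / 2 + (g t)\<^sup>2 / 4\<close> yields
  Yarotsky's approximation \<open>F\<^sub>m t = t - (\<Sum>k=1..m. g\<^sup>k t / 4\<^sup>k)\<close> with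
  \<open>0 \<le> F\<^sub>m t - t\<^sup>2 \<le> 1 / 4\<^sup>m\<^sup>+\<^sup>1\<close>; the error is one-sided, so it does not add up in the difference
  of the two squares.  The network carries the pairs \<open>(g\<^sup>k t, 4\<^sup>k F\<^sub>k t)\<close>, both nonnegative so that
  ReLU acts as the identity on them, through \<open>m\<close> blocks of two layers, and finally rescales
  by \<open>4\<^sup>m\<^sup>+\<^sup>1\<close> with halving layers.  Weights \<open>\<plusminus>2\<^sup>j\<close> with \<open>j \<ge> 0\<close> are emulated by repeating a unit
  \<open>2\<^sup>j\<^sup>+\<^sup>1\<close> times and connecting every copy with weight \<open>\<plusminus>1/2\<close>.\<close>

lemma relu_eq_self [simp]: "0 \<le> x \<Longrightarrow> relu x = x"
  by (simp add: relu_def)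

lemma relu_nonneg [simp]: "0 \<le> relu x"
  by (simp add: relu_def)

lemma relu_relu_minus: "0 \<le> c \<Longrightarrow> relu (relu t - c) = relu (t - c)"
  by (simp add: relu_def)

lemma relu_add_relu_uminus: "relu a + relu (- a) = \<bar>a\<bar>"
  by (simp add: relu_def)

definition tent :: "real \<Rightarrow> real" where
  "tent t = 2 * t - 4 * relu (t - 1/2)"

fun sq_approx :: "nat \<Rightarrow> real \<Rightarrow> real" where
  "sq_approx 0 t = t"
| "sq_approx (Suc k) t = t - tent t / 2 + sq_approx k (tent t) / 4"

lemma tent_range: "0 \<le> t \<Longrightarrow> t \<le> 1 \<Longrightarrow> 0 \<le> tent t \<and> tent t \<le> 1"
  by (cases "t \<le> 1/2") (auto simp: tent_def relu_def)

lemma funpow_tent_range: "0 \<le> t \<Longrightarrow> t \<le> 1 \<Longrightarrow> 0 \<le> (tent ^^ k) t \<and> (tent ^^ k) t \<le> 1"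
  by (induction k) (auto simp: tent_range)

lemma square_eq_tent: "0 \<le> t \<Longrightarrow> t \<le> 1 \<Longrightarrow> t\<^sup>2 = t - tent t / 2 + (tent t)\<^sup>2 / 4"
  by (cases "t \<le> 1/2") (auto simp: tent_def relu_def power2_eq_square field_simps)

lemma sq_approx_error:
  "0 \<le> t \<Longrightarrow> t \<le> 1 \<Longrightarrow> 0 \<le> sq_approx k t - t\<^sup>2 \<and> sq_approx k t - t\<^sup>2 \<le> 1 / 4 ^ (k + 1)"
proof (induction k arbitrary: t)
  case 0
  have "t - t\<^sup>2 = t * (1 - t)" "t - t\<^sup>2 = 1/4 - (t - 1/2)\<^sup>2"
    by (simp_all add: power2_eq_square algebra_simps)
  moreover have "0 \<le> t * (1 - t)" using 0 by simp
  moreover have "0 \<le> (t - 1/2)\<^sup>2" by simp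
  ultimately have "0 \<le> t - t\<^sup>2" "t - t\<^sup>2 \<le> 1/4" by linarith+
  then show ?case by simp
next
  case (Suc k)
  have "0 \<le> tent t" "tent t \<le> 1" using tent_range Suc.prems by auto
  from Suc.IH[OF this] have "0 \<le> sq_approx k (tent t) - (tent t)\<^sup>2"
    "sq_approx k (tent t) - (tent t)\<^sup>2 \<le> 1 / 4 ^ (k + 1)" by auto
  moreover have "sq_approx (Suc k) t - t\<^sup>2 = (sq_approx k (tent t) - (tent t)\<^sup>2) / 4"
    using square_eq_tent[OF Suc.prems] by simp
  ultimately show ?case by simp
qed

lemma sq_approx_nonneg: "0 \<le> t \<Longrightarrow> t \<le> 1 \<Longrightarrow> 0 \<le> sq_approx k t"
  using sq_approx_error[of t k] zero_le_power2[of t] by linarith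

lemma sq_approx_Suc_right: "sq_approx (Suc k) t = sq_approx k t - (tent ^^ Suc k) t / 4 ^ Suc k"
proof (induction k arbitrary: t)
  case (Suc k)
  have "(tent ^^ Suc k) (tent t) = (tent ^^ Suc (Suc k)) t"
    by (simp only: funpow_Suc_right comp_def)
  with Suc[of "tent t"] show ?case by (simp add: field_simps)
qed simp

definition sq_step :: "real \<times> real \<Rightarrow> real \<times> real" where
  "sq_step p = (let u = tent (relu (fst p)) in (relu u, relu (relu (4 * snd p) - u)))"

lemma funpow_sq_step:
  assumes "0 \<le> t" "t \<le> 1"
  shows "(sq_step ^^ k) (t, t) = ((tent ^^ k) t, 4 ^ k * sq_approx k t)"
proof (induction k)
  case (Suc k)
  let ?u = "(tent ^^ k) t"
  have u: "0 \<le> ?u" "?u \<le> 1" using funpow_tent_range assms by auto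
  have "4 ^ Suc k * sq_approx (Suc k) t = 4 ^ Suc k * sq_approx k t - tent ?u"
    unfolding sq_approx_Suc_right by (simp add: right_diff_distrib)
  moreover have "0 \<le> 4 ^ Suc k * sq_approx (Suc k) t"
    using sq_approx_nonneg[OF assms] by (simp del: sq_approx.simps)
  moreover have "0 \<le> 4 ^ Suc k * sq_approx k t"
    using sq_approx_nonneg[OF assms] by (simp del: sq_approx.simps)
  ultimately show ?case
    using Suc u tent_range[OF u] by (simp add: sq_step_def Let_def del: sq_approx.simps)
qed simp

fun eval_hidden :: "network \<Rightarrow> real list \<Rightarrow> real list" where
  "eval_hidden [] xs = xs"
| "eval_hidden (L # Ls) xs = eval_hidden Ls (map (\<lambda>u. relu (eval_neuron u xs)) L)"

lemma eval_hidden_append: "eval_hidden (A @ B) xs = eval_hidden B (eval_hidden A xs)"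
  by (induction A arbitrary: xs) auto

lemma eval_hidden_two_layers: "eval_hidden [L, L'] xs = eval_hidden [L'] (eval_hidden [L] xs)"
  by simp

lemma eval_net_snoc: "eval_net (H @ [L]) xs = map (\<lambda>u. eval_neuron u (eval_hidden H xs)) L"
proof (induction H arbitrary: xs)
  case (Cons L' H)
  then show ?case by (cases "H @ [L]") auto
qed simp

fun wf_hidden :: "nat \<Rightarrow> network \<Rightarrow> bool" where
  "wf_hidden n [] = True"
| "wf_hidden n (L # Ls) = (L \<noteq> [] \<and> (\<forall>u\<in>set L. length (fst u) = n) \<and> wf_hidden (length L) Ls)"

fun out_dim :: "nat \<Rightarrow> network \<Rightarrow> nat" where
  "out_dim n [] = n"
| "out_dim n (L # Ls) = out_dim (length L) Ls"

lemma wf_hidden_append: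
  "wf_hidden n (A @ B) \<longleftrightarrow> wf_hidden n A \<and> wf_hidden (out_dim n A) B"
  "out_dim n (A @ B) = out_dim (out_dim n A) B"
  by (induction A arbitrary: n) auto

lemma wf_hidden_concat_replicate:
  assumes "wf_hidden n H" "out_dim n H = n"
  shows "wf_hidden n (concat (replicate k H)) \<and> out_dim n (concat (replicate k H)) = n"
  using assms by (induction k) (auto simp: wf_hidden_append)

lemma wf_layers_snoc:
  "wf_hidden n H \<Longrightarrow> length L = 1 \<Longrightarrow> \<forall>u\<in>set L. length (fst u) = out_dim n H \<Longrightarrow>
    wf_layers n (H @ [L])"
proof (induction H arbitrary: n)
  case (Cons L' H)
  then show ?case by (cases "H @ [L]") auto
qed simp

definition pm_vec :: "real \<Rightarrow> real \<Rightarrow> real \<Rightarrow> real \<Rightarrow> real list" where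
  "pm_vec a b c d = replicate 2 a @ replicate 2 b @ replicate 2 c @ replicate 2 d"

text \<open>A state \<open>(t, K)\<close> occupies 2 units for \<open>t\<close> and 8 for \<open>K\<close>: the next layer reads \<open>t\<close> with
  weight 1 and \<open>K\<close> with weight 4.\<close>

definition state_vec :: "real \<times> real \<Rightarrow> real \<times> real \<Rightarrow> real list" where
  "state_vec p q = replicate 2 (fst p) @ replicate 8 (snd p) @ replicate 2 (fst q) @ replicate 8 (snd q)"

definition split_vec :: "real \<Rightarrow> real \<Rightarrow> real \<Rightarrow> real \<Rightarrow> real \<Rightarrow> real \<Rightarrow> real list" where
  "split_vec a b c a' b' c' =
    replicate 4 a @ replicate 8 b @ replicate 2 c @ replicate 4 a' @ replicate 8 b' @ replicate 2 c'"

lemma eval_neuron_pm_vec: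
  "eval_neuron (pm_vec a b c d, e) (pm_vec p q r s) = 2*a*p + 2*b*q + 2*c*r + 2*d*s + e"
  by (simp add: eval_neuron_def pm_vec_def sum_list_replicate)

lemma eval_neuron_state_vec:
  "eval_neuron (state_vec (a, b) (c, d), e) (state_vec p q) =
    2*a*fst p + 8*b*snd p + 2*c*fst q + 8*d*snd q + e"
  by (simp add: eval_neuron_def state_vec_def sum_list_replicate)

lemma eval_neuron_split_vec:
  "eval_neuron (split_vec a b c a' b' c', e) (split_vec p q r p' q' r') =
    4*a*p + 8*b*q + 2*c*r + 4*a'*p' + 8*b'*q' + 2*c'*r' + e"
  by (simp add: eval_neuron_def split_vec_def sum_list_replicate)

definition lay_in :: layer where
  "lay_in = replicate 2 ([1/2, 1/2], 0) @ replicate 2 ([-1/2, -1/2], 0) @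
    replicate 2 ([1/2, -1/2], 0) @ replicate 2 ([-1/2, 1/2], 0)"

definition lay_copy :: layer where
  "lay_copy = replicate 10 (pm_vec (1/2) (1/2) 0 0, 0) @ replicate 10 (pm_vec 0 0 (1/2) (1/2), 0)"

definition lay_split :: layer where
  "lay_split =
    replicate 4 (state_vec (1/2, 0) (0, 0), 0) @ replicate 8 (state_vec (1/2, 0) (0, 0), -1/2) @
    replicate 2 (state_vec (0, 1/2) (0, 0), 0) @
    replicate 4 (state_vec (0, 0) (1/2, 0), 0) @ replicate 8 (state_vec (0, 0) (1/2, 0), -1/2) @
    replicate 2 (state_vec (0, 0) (0, 1/2), 0)"

definition lay_merge :: layer where
  "lay_merge =
    replicate 2 (split_vec (1/2) (-1/2) 0 0 0 0, 0) @ replicate 8 (split_vec (-1/2) (1/2) (1/2) 0 0 0, 0) @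
    replicate 2 (split_vec 0 0 0 (1/2) (-1/2) 0, 0) @ replicate 8 (split_vec 0 0 0 (-1/2) (1/2) (1/2), 0)"

definition lay_extract :: layer where
  "lay_extract = [(state_vec (0, 1/2) (0, 0), 0), (state_vec (0, 0) (0, 1/2), 0)]"

definition lay_halve :: layer where
  "lay_halve = [([1/2, 0], 0), ([0, 1/2], 0)]"

definition lay_out :: layer where
  "lay_out = [([1/2, -1/2], 0)]"

lemma eval_hidden_lay_in:
  "eval_hidden [lay_in] [x, y] =
    pm_vec (relu ((x + y) / 2)) (relu (- ((x + y) / 2))) (relu ((x - y) / 2)) (relu (- ((x - y) / 2)))"
  by (simp add: lay_in_def pm_vec_def eval_neuron_def add_divide_distrib diff_divide_distrib)

lemma eval_hidden_lay_copy:
  "eval_hidden [lay_copy] (pm_vec p q p' q') =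
    state_vec (relu (p + q), relu (p + q)) (relu (p' + q'), relu (p' + q'))"
  by (simp add: lay_copy_def eval_neuron_pm_vec state_vec_def flip: replicate_add)

lemma eval_hidden_lay_split:
  "eval_hidden [lay_split] (state_vec p q) =
    split_vec (relu (fst p)) (relu (fst p - 1/2)) (relu (4 * snd p))
      (relu (fst q)) (relu (fst q - 1/2)) (relu (4 * snd q))"
  by (simp add: lay_split_def eval_neuron_state_vec split_vec_def)

lemma eval_hidden_lay_merge:
  "eval_hidden [lay_merge] (split_vec a b c a' b' c') =
    state_vec (relu (2*a - 4*b), relu (c - 2*a + 4*b)) (relu (2*a' - 4*b'), relu (c' - 2*a' + 4*b'))"
  by (simp add: lay_merge_def eval_neuron_split_vec state_vec_def algebra_simps)

lemma eval_hidden_lay_split_merge: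
  "eval_hidden [lay_split, lay_merge] (state_vec p q) = state_vec (sq_step p) (sq_step q)"
  unfolding eval_hidden_two_layers eval_hidden_lay_split eval_hidden_lay_merge
  by (simp add: sq_step_def tent_def relu_relu_minus Let_def algebra_simps)

lemma eval_hidden_sq_blocks:
  "eval_hidden (concat (replicate k [lay_split, lay_merge])) (state_vec p q) =
    state_vec ((sq_step ^^ k) p) ((sq_step ^^ k) q)"
proof (induction k arbitrary: p q)
  case (Suc k)
  then show ?case
    by (simp only: concat_replicate_trivial replicate_Suc concat.simps eval_hidden_append
        eval_hidden_lay_split_merge funpow_Suc_right comp_def)
qed simp

lemma eval_hidden_lay_extract:
  "eval_hidden [lay_extract] (state_vec p q) = [relu (4 * snd p), relu (4 * snd q)]"
  by (simp add: lay_extract_def eval_neuron_state_vec)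

lemma eval_hidden_halvings:
  "0 \<le> a \<Longrightarrow> 0 \<le> b \<Longrightarrow> eval_hidden (replicate k lay_halve) [a, b] = [a / 2 ^ k, b / 2 ^ k]"
proof (induction k arbitrary: a b)
  case (Suc k)
  then have "eval_hidden (replicate (Suc k) lay_halve) [a, b] = eval_hidden (replicate k lay_halve) [a/2, b/2]"
    by (simp add: lay_halve_def eval_neuron_def)
  with Suc show ?case by (simp add: field_simps)
qed simp

definition mult_net :: "nat \<Rightarrow> network" where
  "mult_net m = [lay_in, lay_copy] @ concat (replicate m [lay_split, lay_merge]) @ [lay_extract] @
    replicate (2 * m + 1) lay_halve @ [lay_out]"

definition sq_channel :: "nat \<Rightarrow> real \<Rightarrow> real" where
  "sq_channel m s = relu (4 * snd ((sq_step ^^ m) (s, s))) / 2 ^ (2 * m + 1)"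

lemma net_fun_mult_net:
  "net_fun (mult_net m) x y = (sq_channel m \<bar>(x + y) / 2\<bar> - sq_channel m \<bar>(x - y) / 2\<bar>) / 2"
proof -
  let ?s = "\<bar>(x + y) / 2\<bar>" and ?s' = "\<bar>(x - y) / 2\<bar>"
  let ?H = "[lay_in, lay_copy] @ concat (replicate m [lay_split, lay_merge]) @ [lay_extract] @
    replicate (2 * m + 1) lay_halve"
  have "eval_hidden [lay_in, lay_copy] [x, y] = state_vec (?s, ?s) (?s', ?s')"
    unfolding eval_hidden_two_layers eval_hidden_lay_in eval_hidden_lay_copy relu_add_relu_uminus
    by simp
  then have "eval_hidden ?H [x, y] = [sq_channel m ?s, sq_channel m ?s']"
    by (simp only: eval_hidden_append eval_hidden_sq_blocks eval_hidden_lay_extract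
        eval_hidden_halvings relu_nonneg sq_channel_def)
  moreover have "mult_net m = ?H @ [lay_out]"
    by (simp add: mult_net_def)
  ultimately show ?thesis
    unfolding net_fun_def by (simp only: eval_net_snoc) (simp add: lay_out_def eval_neuron_def)
qed

lemma sq_channel_eq: "0 \<le> s \<Longrightarrow> s \<le> 1 \<Longrightarrow> sq_channel m s = 2 * sq_approx m s"
  using sq_approx_nonneg[of s m]
  by (simp add: sq_channel_def funpow_sq_step power_add power_mult del: sq_approx.simps)

lemma mult_net_zero: "x = 0 \<or> y = 0 \<Longrightarrow> net_fun (mult_net m) x y = 0"
  by (auto simp: net_fun_mult_net)

lemma mult_net_error:
  assumes "x \<in> {-1..1}" "y \<in> {-1..1}"
  shows "\<bar>net_fun (mult_net m) x y - x * y\<bar> \<le> 1 / 4 ^ (m + 1)"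
proof -
  define s s' where "s = \<bar>x + y\<bar> / 2" and "s' = \<bar>x - y\<bar> / 2"
  have s: "0 \<le> s" "s \<le> 1" "0 \<le> s'" "s' \<le> 1"
    using assms by (auto simp: s_def s'_def)
  have "net_fun (mult_net m) x y = sq_approx m s - sq_approx m s'"
    using s by (simp add: net_fun_mult_net sq_channel_eq flip: s_def s'_def)
  moreover have "x * y = s\<^sup>2 - s'\<^sup>2"
    unfolding s_def s'_def power_divide power2_abs by (simp add: power2_eq_square field_simps)
  ultimately show ?thesis
    using sq_approx_error[OF s(1,2), of m] sq_approx_error[OF s(3,4), of m] by linarith
qed

lemma relu_net2_mult_net: "relu_net2 (mult_net m)"
proof -
  have "wf_hidden 20 [lay_split, lay_merge]" "out_dim 20 [lay_split, lay_merge] = 20"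
    by (simp_all add: lay_split_def lay_merge_def state_vec_def split_vec_def)
  from wf_hidden_concat_replicate[OF this]
  have blocks: "wf_hidden 20 (concat (replicate m [lay_split, lay_merge]))"
    "out_dim 20 (concat (replicate m [lay_split, lay_merge])) = 20" by auto
  have "wf_hidden 2 [lay_halve]" "out_dim 2 [lay_halve] = 2"
    by (simp_all add: lay_halve_def)
  from wf_hidden_concat_replicate[OF this, of "2 * m + 1"]
  have halvings: "wf_hidden 2 (replicate (2 * m + 1) lay_halve)"
    "out_dim 2 (replicate (2 * m + 1) lay_halve) = 2" by (simp_all add: concat_replicate_trivial)
  show ?thesis
    unfolding relu_net2_def mult_net_def append_assoc[symmetric]
    using blocks halvings
    by (intro wf_layers_snoc) (simp_all add: wf_hidden_append lay_in_def lay_copy_def pm_vec_def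
        lay_extract_def state_vec_def lay_out_def)
qed

lemma half_weights_mult_net: "half_weights (mult_net m)"
  by (auto simp: half_weights_def mult_net_def lay_in_def lay_copy_def lay_split_def lay_merge_def
      lay_extract_def lay_halve_def lay_out_def pm_vec_def state_vec_def split_vec_def)

lemma depth_mult_net: "depth (mult_net m) = 4 * m + 6"
  by (simp add: depth_def mult_net_def length_concat sum_list_replicate)

lemma width_mult_net: "width (mult_net m) \<le> 28"
  by (auto simp: width_def mult_net_def lay_in_def lay_copy_def lay_split_def lay_merge_def
      lay_extract_def lay_halve_def lay_out_def)

lemma sum_list_map_concat_replicate:
  "sum_list (map f (concat (replicate m xs))) = of_nat m * (sum_list (map f xs) :: 'a::semiring_1)"
  by (induction m) (auto simp: distrib_right)

lemma num_weights_mult_net: "num_weights (mult_net m) = 116 + 372 * m"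
  by (simp add: num_weights_def mult_net_def sum_list_map_concat_replicate sum_list_replicate
      filter_replicate lay_in_def lay_copy_def lay_split_def lay_merge_def lay_extract_def
      lay_halve_def lay_out_def pm_vec_def state_vec_def split_vec_def)

theorem proposition2:
  shows "\<exists>Cd Cw Cn :: nat. \<forall>r::nat. r \<ge> 1 \<longrightarrow>
    (\<exists>N. relu_net2 N \<and> half_weights N \<and>
      (\<forall>x y. (x = 0 \<or> y = 0) \<longrightarrow> net_fun N x y = 0) \<and>
      (\<forall>x y. x \<in> {-1..1} \<longrightarrow> y \<in> {-1..1} \<longrightarrow>
          \<bar>net_fun N x y - x * y\<bar> \<le> 6 / 2 ^ (2 * (r + 1))) \<and>
      depth N \<le> Cd * r \<and> width N \<le> Cw \<and> num_weights N \<le> Cn * r)"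
proof (intro exI allI impI)
  fix r :: nat
  assume "1 \<le> r"
  have "1 / 4 ^ (r + 1) \<le> (6 / 2 ^ (2 * (r + 1)) :: real)"
    by (simp add: power_mult frac_le)
  with \<open>1 \<le> r\<close> show "relu_net2 (mult_net r) \<and> half_weights (mult_net r) \<and>
      (\<forall>x y. (x = 0 \<or> y = 0) \<longrightarrow> net_fun (mult_net r) x y = 0) \<and>
      (\<forall>x y. x \<in> {-1..1} \<longrightarrow> y \<in> {-1..1} \<longrightarrow>
          \<bar>net_fun (mult_net r) x y - x * y\<bar> \<le> 6 / 2 ^ (2 * (r + 1))) \<and>
      depth (mult_net r) \<le> 10 * r \<and> width (mult_net r) \<le> 28 \<and> num_weights (mult_net r) \<le> 488 * r"
    using relu_net2_mult_net half_weights_mult_net mult_net_zero mult_net_error[THEN order_trans]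
      width_mult_net
    by (simp add: depth_mult_net num_weights_mult_net)
qed

end
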